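(* Let $(\Omega,F,\mathbf P)$ be a non-trivial probability space and let $\psi\colon[1,\infty)\to(0,\infty)$ be a finite, continuous, strictly increasing function with $\psi(1)=\inf_{p\ge1}\psi(p)=1$. Let $q=(q(1),q(2),\dots)$ be a strictly increasing sequence of real numbers with $q(1)=1$ and $\lim_{m\to\infty}q(m)=\infty$, and put $$W[q,\psi]=\sup_{m=1,2,\dots}\frac{\psi(q(m+1))}{\psi(q(m))}.$$ Suppose $W[q,\psi]<\infty$. Then for every measurable $f\colon\Omega\to\mathbb R$, $$\|f\|G^q\psi\le\|f\|G\psi\le W[q,\psi]\,\|f\|G^q\psi,$$ where $$\|f\|G\psi=\sup_{p\ge1}\frac{|f|_p}{\psi(p)},\qquad \|f\|G^q\psi=\sup_{m=1,2,\dots}\frac{|f|_{q(m)}}{\psi(q(m))}.$$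
   Context: For a random variable $f$ on $(\Omega,F,\mathbf P)$, $|f|_p=\left(\mathbf E|f|^p\right)^{1/p}$ for $1\le p<\infty$ (possibly $+\infty$). The quantity $\|f\|G\psi$ is the Grand Lebesgue Space norm with generating function $\psi$, and $\|f\|G^q\psi$ is the discrete Grand Lebesgue Space norm. *)

theory Defs
  imports "HOL-Probability.Probability"
begin

definition Lp_norm :: "'a measure \<Rightarrow> ('a \<Rightarrow> real) \<Rightarrow> real \<Rightarrow> ennreal" where
  "Lp_norm M f p =
     (let I = (\<integral>\<^sup>+ x. ennreal (\<bar>f x\<bar> powr p) \<partial>M)
      in if I = \<infinity> then \<infinity> else ennreal (enn2real I powr (1 / p)))"

definition GLS_norm :: "'a measure \<Rightarrow> (real \<Rightarrow> real) \<Rightarrow> ('a \<Rightarrow> real) \<Rightarrow> ennreal" where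
  "GLS_norm M \<psi> f = (SUP p\<in>{1..}. Lp_norm M f p / ennreal (\<psi> p))"

definition GLS_disc_norm :: "'a measure \<Rightarrow> (nat \<Rightarrow> real) \<Rightarrow> (real \<Rightarrow> real) \<Rightarrow> ('a \<Rightarrow> real) \<Rightarrow> ennreal" where
  "GLS_disc_norm M q \<psi> f = (SUP m\<in>{1..}. Lp_norm M f (q m) / ennreal (\<psi> (q m)))"

definition W_const :: "(nat \<Rightarrow> real) \<Rightarrow> (real \<Rightarrow> real) \<Rightarrow> ennreal" where
  "W_const q \<psi> = (SUP m\<in>{1..}. ennreal (\<psi> (q (Suc m)) / \<psi> (q m)))"

end

theory Submission
  imports Defs
begin

text \<open>
  The discrete norm is a supremum over fewer exponents, whence the first inequality.
  For the second, every p \<ge> 1 lies in a bracket q(m) \<le> p < q(m+1). Lyapunov's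
  inequality gives |f|_p \<le> |f|_{q(m+1)}, and \<psi>(q(m)) \<le> \<psi>(p), so
  |f|_p / \<psi>(p) \<le> |f|_{q(m+1)} / \<psi>(q(m+1)) \<cdot> \<psi>(q(m+1)) / \<psi>(q(m)),
  which is at most the discrete norm times W[q,\<psi>].
\<close>

lemma powr_le_1_plus_powr:
  fixes x p r :: real
  assumes "0 \<le> x" "0 \<le> p" "p \<le> r"
  shows "x powr p \<le> 1 + x powr r"
proof (cases "x \<le> 1")
  case True
  then have "x powr p \<le> 1"
    using assms powr_mono2[of p x 1] by simp
  then show ?thesis using powr_ge_zero[of x r] by linarith
next
  case False
  then have "x powr p \<le> x powr r" using assms by (intro powr_mono) auto
  then show ?thesis by simp
qed

lemma convex_on_max0_powr:
  fixes s :: real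
  assumes "1 \<le> s"
  shows "convex_on UNIV (\<lambda>y. max y 0 powr s)"
proof (rule convex_onI)
  fix t x y :: real
  assume t: "0 < t" "t < 1"
  define a b where "a = max x 0" and "b = max y 0"
  have ab: "0 \<le> a" "0 \<le> b" by (auto simp: a_def b_def)
  have scale: "(c * d) powr s \<le> c * d powr s" if "0 \<le> c" "c \<le> 1" "0 \<le> d" for c d :: real
  proof -
    have "c powr s \<le> c"
      using that assms powr_mono'[of 1 s c] by (cases "c = 0") auto
    then show ?thesis using that by (simp add: powr_mult mult_right_mono)
  qed
  have "max ((1 - t) *\<^sub>R x + t *\<^sub>R y) 0 \<le> (1 - t) * a + t * b"
    using t by (auto simp: a_def b_def intro!: add_mono mult_left_mono)
  then have "max ((1 - t) *\<^sub>R x + t *\<^sub>R y) 0 powr s \<le> ((1 - t) * a + t * b) powr s"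
    using assms by (intro powr_mono2) auto
  also have "\<dots> \<le> (1 - t) * a powr s + t * b powr s"
  proof (cases "a = 0 \<or> b = 0")
    case True
    then show ?thesis using scale[of t b] scale[of "1 - t" a] t ab assms by auto
  next
    case False
    then show ?thesis
      using convex_onD[OF powr_convex[OF assms], of t a b] t ab by auto
  qed
  finally show "max ((1 - t) *\<^sub>R x + t *\<^sub>R y) 0 powr s
      \<le> (1 - t) * max x 0 powr s + t * max y 0 powr s"
    by (simp add: a_def b_def)
qed simp

lemma (in finite_measure) integrable_abs_powr_mono:
  fixes f :: "'a \<Rightarrow> real" and p r :: real
  assumes "integrable M (\<lambda>x. \<bar>f x\<bar> powr r)" "f \<in> borel_measurable M" "0 \<le> p" "p \<le> r"
  shows "integrable M (\<lambda>x. \<bar>f x\<bar> powr p)"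
proof (rule Bochner_Integration.integrable_bound)
  show "integrable M (\<lambda>x. 1 + \<bar>f x\<bar> powr r)" using assms(1) by simp
  show "(\<lambda>x. \<bar>f x\<bar> powr p) \<in> borel_measurable M" using assms(2) by (rule measurable_abs_powr)
  show "AE x in M. norm (\<bar>f x\<bar> powr p) \<le> norm (1 + \<bar>f x\<bar> powr r)"
    using powr_le_1_plus_powr[OF _ assms(3,4)] by (simp add: add_increasing)
qed

text \<open>Lyapunov's inequality, via Jensen for y \<mapsto> y^{r/p}. The clamping to max y 0
  in the convex function is needed because the library's Jensen inequality asks for
  convexity on an open interval.\<close>
lemma (in prob_space) expectation_abs_powr_root_mono:
  fixes f :: "'a \<Rightarrow> real" and p r :: real
  assumes int_r: "integrable M (\<lambda>x. \<bar>f x\<bar> powr r)" and f: "f \<in> borel_measurable M"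
    and "0 < p" "p \<le> r"
  shows "expectation (\<lambda>x. \<bar>f x\<bar> powr p) powr (1 / p)
       \<le> expectation (\<lambda>x. \<bar>f x\<bar> powr r) powr (1 / r)"
proof -
  define s where "s = r / p"
  have s: "1 \<le> s" using assms by (simp add: s_def)
  define Ep Er where "Ep = expectation (\<lambda>x. \<bar>f x\<bar> powr p)"
    and "Er = expectation (\<lambda>x. \<bar>f x\<bar> powr r)"
  have Ep: "0 \<le> Ep" by (simp add: Ep_def)
  have comp: "max (\<bar>y\<bar> powr p) 0 powr s = \<bar>y\<bar> powr r" for y
    using assms by (simp add: powr_powr s_def)
  have "max Ep 0 powr s \<le> expectation (\<lambda>x. max (\<bar>f x\<bar> powr p) 0 powr s)"
    unfolding Ep_def
    using integrable_abs_powr_mono[OF int_r f] int_r assms convex_on_max0_powr[OF s] comp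
    by (intro jensens_inequality[where I = UNIV]) auto
  then have jensen: "Ep powr s \<le> Er" using Ep comp by (simp add: Er_def)
  have "Ep powr (1 / p) = (Ep powr s) powr (1 / r)"
    using assms by (simp add: powr_powr s_def)
  also have "\<dots> \<le> Er powr (1 / r)"
    using jensen Ep assms by (intro powr_mono2) auto
  finally show ?thesis by (simp add: Ep_def Er_def)
qed

lemma (in prob_space) Lp_norm_mono:
  fixes f :: "'a \<Rightarrow> real" and p r :: real
  assumes f: "f \<in> borel_measurable M" and "0 < p" "p \<le> r"
  shows "Lp_norm M f p \<le> Lp_norm M f r"
proof (cases "(\<integral>\<^sup>+ x. ennreal (\<bar>f x\<bar> powr r) \<partial>M) = \<infinity>")
  case True
  then show ?thesis by (simp add: Lp_norm_def)
next
  case False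
  have int_r: "integrable M (\<lambda>x. \<bar>f x\<bar> powr r)"
    using False f by (intro integrableI_nonneg) (auto simp: top.not_eq_extremum)
  have int_p: "integrable M (\<lambda>x. \<bar>f x\<bar> powr p)"
    using integrable_abs_powr_mono[OF int_r f] assms by simp
  show ?thesis
    using expectation_abs_powr_root_mono[OF int_r f assms(2,3)]
    by (simp add: Lp_norm_def nn_integral_eq_integral[OF int_r] nn_integral_eq_integral[OF int_p])
qed

lemma GLS_disc_norm_le_GLS_norm:
  assumes "\<And>m. 1 \<le> m \<Longrightarrow> 1 \<le> q m"
  shows "GLS_disc_norm M q \<psi> f \<le> GLS_norm M \<psi> f"
  unfolding GLS_disc_norm_def GLS_norm_def
  using assms by (intro SUP_least SUP_upper) auto

lemma ex_bracketing_index: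
  fixes q :: "nat \<Rightarrow> real"
  assumes "filterlim q at_top sequentially" "q 1 \<le> p"
  shows "\<exists>m\<ge>1. q m \<le> p \<and> p < q (Suc m)"
proof -
  define S where "S = {m. 1 \<le> m \<and> q m \<le> p}"
  obtain N where N: "\<And>n. N \<le> n \<Longrightarrow> p < q n"
    using assms(1) by (auto simp: filterlim_at_top_dense eventually_sequentially)
  have "S \<subseteq> {..<N}"
    using N by (auto simp: S_def not_le[symmetric])
  then have "finite S" by (rule finite_subset) simp
  have "Max S \<in> S"
    using \<open>finite S\<close> assms(2) by (intro Max_in) (auto simp: S_def)
  moreover have "Suc (Max S) \<notin> S"
    using Max_ge[OF \<open>finite S\<close>] Suc_n_not_le_n by blast
  ultimately show ?thesis by (auto simp: S_def)
qed

lemma ennreal_divide_le_divide_mult: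
  assumes "a \<le> b" "0 < y" "y \<le> x" "0 < z"
  shows "a / ennreal x \<le> b / ennreal z * ennreal (z / y)"
proof -
  have "a / ennreal x = a * ennreal (1 / x)"
    using assms by (simp add: divide_ennreal_def inverse_ennreal inverse_eq_divide)
  also have "\<dots> \<le> b * ennreal (1 / y)"
    using assms by (intro mult_mono ennreal_leI) (auto simp: frac_le)
  also have "\<dots> = b * (ennreal (1 / z) * ennreal (z / y))"
    using assms by (simp flip: ennreal_mult)
  also have "\<dots> = b / ennreal z * ennreal (z / y)"
    using assms by (simp add: divide_ennreal_def inverse_ennreal inverse_eq_divide mult.assoc)
  finally show ?thesis .
qed

lemma GLS_norm_le_W_const_mult:
  assumes "prob_space M" and f: "f \<in> borel_measurable M"
    and \<psi>_pos: "\<And>p. 1 \<le> p \<Longrightarrow> 0 < \<psi> p" and \<psi>_mono: "mono_on {1..} \<psi>"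
    and q_ge_1: "\<And>m. 1 \<le> m \<Longrightarrow> 1 \<le> q m" and "q 1 = 1"
    and q_lim: "filterlim q at_top sequentially"
  shows "GLS_norm M \<psi> f \<le> W_const q \<psi> * GLS_disc_norm M q \<psi> f"
  unfolding GLS_norm_def
proof (rule SUP_least)
  fix p :: real
  assume "p \<in> {1..}"
  then have p: "1 \<le> p" by simp
  then obtain m where m: "1 \<le> m" "q m \<le> p" "p < q (Suc m)"
    using ex_bracketing_index[OF q_lim] \<open>q 1 = 1\<close> by auto
  have "Lp_norm M f p / ennreal (\<psi> p)
      \<le> Lp_norm M f (q (Suc m)) / ennreal (\<psi> (q (Suc m))) * ennreal (\<psi> (q (Suc m)) / \<psi> (q m))"
  proof (rule ennreal_divide_le_divide_mult)
    show "Lp_norm M f p \<le> Lp_norm M f (q (Suc m))"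
      using prob_space.Lp_norm_mono[OF \<open>prob_space M\<close> f] p m by simp
    show "\<psi> (q m) \<le> \<psi> p"
      using \<psi>_mono q_ge_1 m p by (auto intro: mono_onD)
  qed (use \<psi>_pos q_ge_1 m in auto)
  also have "\<dots> \<le> GLS_disc_norm M q \<psi> f * W_const q \<psi>"
    unfolding GLS_disc_norm_def W_const_def
    using m by (intro mult_mono SUP_upper) auto
  finally show "Lp_norm M f p / ennreal (\<psi> p) \<le> W_const q \<psi> * GLS_disc_norm M q \<psi> f"
    by (simp add: mult.commute)
qed

theorem theorem2p1:
  fixes M :: "'a measure" and \<psi> :: "real \<Rightarrow> real" and q :: "nat \<Rightarrow> real"
    and f :: "'a \<Rightarrow> real"
  assumes "prob_space M"
    and nontrivial: "\<exists>A\<in>sets M. 0 < measure M A \<and> measure M A < 1"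
    and psi_pos: "\<And>p. p \<ge> 1 \<Longrightarrow> \<psi> p > 0"
    and psi_cont: "continuous_on {1..} \<psi>"
    and psi_mono: "strict_mono_on {1..} \<psi>"
    and psi_1: "\<psi> 1 = 1" and psi_inf: "(INF p\<in>{1..}. \<psi> p) = 1"
    and q_mono: "strict_mono_on {1..} q"
    and q_1: "q 1 = 1"
    and q_lim: "filterlim q at_top sequentially"
    and W_fin: "W_const q \<psi> < \<infinity>"
    and f_meas: "f \<in> borel_measurable M"
  shows "GLS_disc_norm M q \<psi> f \<le> GLS_norm M \<psi> f
       \<and> GLS_norm M \<psi> f \<le> W_const q \<psi> * GLS_disc_norm M q \<psi> f"
proof -
  have q_ge_1: "1 \<le> q m" if "1 \<le> m" for m
    using strict_mono_on_leD[OF q_mono, of 1 m] that q_1 by simp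
  show ?thesis
    using GLS_disc_norm_le_GLS_norm[OF q_ge_1]
      GLS_norm_le_W_const_mult[OF \<open>prob_space M\<close> f_meas psi_pos
        strict_mono_on_imp_mono_on[OF psi_mono] q_ge_1 q_1 q_lim]
    by simp
qed

end
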